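(* Let $n\ge2$, let $P$ be a partial $n$-Metric on a set $X$, let $\{x_i\}_{i\in\mathbb{N}}$ be a sequence in $X$ and let $r\in\mathbb{R}$. The following are equivalent: (a) $\{x_i\}$ is a Cauchy sequence with central distance $r$; (b) for every $\epsilon>0$ there is $N\in\mathbb{N}$ such that for all $i,j>N$, $-\epsilon<P(\langle x_i\rangle^{n-1},x_j)-r<\epsilon$; (c) for every $\epsilon>0$ there is $N\in\mathbb{N}$ such that for all $i\ge j>N$, $-\epsilon<P(\langle x_i\rangle^{n-1},x_j)-r<\epsilon$; (d) for every $\epsilon>0$ there is $N\in\mathbb{N}$ such that for all $i\ge j>N$, $-\epsilon<P(\langle x_j\rangle^{n-1},x_i)-r<\epsilon$.
   Context: Notation: $\langle a\rangle^k$ denotes the $k$-tuple $(a,\dots,a)$ inserted into an argument list. A partial $n$-Metric on $X$ is a function $P:X^n\to\mathbb{R}$ such that for all $x_1,\dots,x_n,a\in X$: (1) $P(\langle x_1\rangle^n)\le P(\langle x_1\rangle^{n-1},x_2)$; (2) $P$ is invariant under permutations of its $n$ arguments; (3) $P(\langle x_1\rangle^{n-1},x_2)=P(\langle x_1\rangle^n)$ and $P(\langle x_2\rangle^{n-1},x_1)=P(\langle x_2\rangle^n)$ iff $x_1=x_2$; (4) $P(x_1,\dots,x_n)\le P(x_1,\dots,x_{n-1},a)+P(\langle a\rangle^{n-1},x_n)-P(\langle a\rangle^n)$. A sequence $\{x_i\}$ is Cauchy with central distance $r\in\mathbb{R}$ if for every $\epsilon>0$ there is $N$ such that for all $i_1,\dots,i_n>N$,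 $-\epsilon<P(x_{i_1},\dots,x_{i_n})-r<\epsilon$. *)

theory Defs
  imports "HOL-Library.Multiset" Complex_Main
begin

text \<open>An n-ary function P on X is represented as a function on lists; only lists
of length n with entries in X are relevant. The tuple notation of the paper
corresponds to list concatenation, and replicate k a is the k-tuple (a,...,a).\<close>

definition partial_n_metric :: "nat \<Rightarrow> 'a set \<Rightarrow> ('a list \<Rightarrow> real) \<Rightarrow> bool" where
  "partial_n_metric n X P \<longleftrightarrow>
     (\<forall>x1\<in>X. \<forall>x2\<in>X. P (replicate n x1) \<le> P (replicate (n - 1) x1 @ [x2])) \<and>
     (\<forall>xs ys. length xs = n \<and> set xs \<subseteq> X \<and> mset ys = mset xs \<longrightarrow> P ys = P xs) \<and>
     (\<forall>x1\<in>X. \<forall>x2\<in>X.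
        (P (replicate (n - 1) x1 @ [x2]) = P (replicate n x1) \<and>
         P (replicate (n - 1) x2 @ [x1]) = P (replicate n x2)) \<longleftrightarrow> x1 = x2) \<and>
     (\<forall>xs xn a. length xs = n - 1 \<and> set xs \<subseteq> X \<and> xn \<in> X \<and> a \<in> X \<longrightarrow>
        P (xs @ [xn]) \<le> P (xs @ [a]) + P (replicate (n - 1) a @ [xn]) - P (replicate n a))"

definition pnm_cauchy :: "nat \<Rightarrow> ('a list \<Rightarrow> real) \<Rightarrow> (nat \<Rightarrow> 'a) \<Rightarrow> real \<Rightarrow> bool" where
  "pnm_cauchy n P x r \<longleftrightarrow>
     (\<forall>\<epsilon>>0. \<exists>N::nat. \<forall>is. length is = n \<and> (\<forall>i\<in>set is. i > N) \<longrightarrow>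
        - \<epsilon> < P (map x is) - r \<and> P (map x is) - r < \<epsilon>)"

end

theory Submission
  imports Defs
begin

text \<open>Replacing the entries of \<open>\<langle>a\<rangle>\<^sup>n\<close> one at a time by \<open>y\<^sub>1, \<dots>, y\<^sub>n\<close>, the triangle
inequality (4) gives \<open>P(y\<^sub>1, \<dots>, y\<^sub>n) \<le> P(\<langle>a\<rangle>\<^sup>n) + \<Sum>\<^sub>k (P(\<langle>a\<rangle>\<^sup>n\<^sup>-\<^sup>1, y\<^sub>k) - P(\<langle>a\<rangle>\<^sup>n))\<close>, and
replacing the \<open>y\<^sub>k\<close> one at a time by \<open>b\<close> gives
\<open>P(\<langle>b\<rangle>\<^sup>n) - \<Sum>\<^sub>k (P(\<langle>y\<^sub>k\<rangle>\<^sup>n\<^sup>-\<^sup>1, b) - P(\<langle>y\<^sub>k\<rangle>\<^sup>n)) \<le> P(y\<^sub>1, \<dots>, y\<^sub>n)\<close>. For a tuple of terms of the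
sequence, take for \<open>a\<close> the term of largest and for \<open>b\<close> the term of smallest index: then only
pair terms \<open>P(\<langle>x\<^sub>i\<rangle>\<^sup>n\<^sup>-\<^sup>1, x\<^sub>j)\<close> with \<open>i \<ge> j\<close> occur (the diagonal ones included), so their
closeness to \<open>r\<close> forces closeness of all \<open>n\<close>-tuple terms. With the roles of largest and
smallest index exchanged, the same works for \<open>i \<le> j\<close>.\<close>

lemma replicate_pred_snoc: "n \<ge> 1 \<Longrightarrow> replicate (n - 1) a @ [a] = replicate n a"
  by (cases n) (simp_all add: replicate_append_same)

lemma partial_n_metric_perm:
  assumes "partial_n_metric n X P" "length xs = n" "set xs \<subseteq> X" "mset ys = mset xs"
  shows "P ys = P xs"
  using assms unfolding partial_n_metric_def by blast

lemma partial_n_metric_triangle: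
  assumes "partial_n_metric n X P" "length xs = n - 1" "set xs \<subseteq> X" "xn \<in> X" "a \<in> X"
  shows "P (xs @ [xn]) \<le> P (xs @ [a]) + P (replicate (n - 1) a @ [xn]) - P (replicate n a)"
  using assms unfolding partial_n_metric_def by blast

text \<open>Up to permutation, both tuples are \<open>zs @ [_]\<close> with the same \<open>zs\<close>, so (4) applies.\<close>

lemma partial_n_metric_replace_replicate:
  assumes pm: "partial_n_metric n X P" and a: "a \<in> X" and y: "y \<in> X"
    and ys: "set ys \<subseteq> X" "length ys < n"
  shows "P (replicate (n - Suc (length ys)) a @ y # ys)
           \<le> P (replicate (n - length ys) a @ ys) + P (replicate (n - 1) a @ [y]) - P (replicate n a)"
    and "P (replicate (n - length ys) a @ ys)
           \<le> P (replicate (n - Suc (length ys)) a @ y # ys) + P (replicate (n - 1) y @ [a]) - P (replicate n y)"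
proof -
  define zs where "zs = replicate (n - Suc (length ys)) a @ ys"
  have zs: "length zs = n - 1" "set zs \<subseteq> X"
    using ys a by (auto simp: zs_def)
  have "P (replicate (n - Suc (length ys)) a @ y # ys) = P (zs @ [y])"
    by (rule partial_n_metric_perm[OF pm]) (use zs y ys in \<open>auto simp: zs_def\<close>)
  moreover have "P (replicate (n - length ys) a @ ys) = P (zs @ [a])"
  proof (rule partial_n_metric_perm[OF pm])
    have "n - length ys = Suc (n - Suc (length ys))" using ys by simp
    then show "mset (replicate (n - length ys) a @ ys) = mset (zs @ [a])"
      by (simp add: zs_def)
  qed (use zs a ys in auto)
  ultimately show "P (replicate (n - Suc (length ys)) a @ y # ys)
           \<le> P (replicate (n - length ys) a @ ys) + P (replicate (n - 1) a @ [y]) - P (replicate n a)"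
    and "P (replicate (n - length ys) a @ ys)
           \<le> P (replicate (n - Suc (length ys)) a @ y # ys) + P (replicate (n - 1) y @ [a]) - P (replicate n y)"
    using partial_n_metric_triangle[OF pm zs y a] partial_n_metric_triangle[OF pm zs a y] by simp_all
qed

lemma partial_n_metric_replicate_append_le:
  assumes pm: "partial_n_metric n X P" and a: "a \<in> X"
  shows "length ys \<le> n \<Longrightarrow> set ys \<subseteq> X \<Longrightarrow>
    P (replicate (n - length ys) a @ ys)
      \<le> P (replicate n a) + (\<Sum>y\<leftarrow>ys. P (replicate (n - 1) a @ [y]) - P (replicate n a))"
proof (induction ys)
  case (Cons y ys)
  then show ?case
    using partial_n_metric_replace_replicate(1)[OF pm a, of y ys] by simp
qed simp

lemma partial_n_metric_replicate_append_ge: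
  assumes pm: "partial_n_metric n X P" and b: "b \<in> X"
  shows "length ys \<le> n \<Longrightarrow> set ys \<subseteq> X \<Longrightarrow>
    P (replicate n b) - (\<Sum>y\<leftarrow>ys. P (replicate (n - 1) y @ [b]) - P (replicate n y))
      \<le> P (replicate (n - length ys) b @ ys)"
proof (induction ys)
  case (Cons y ys)
  then show ?case
    using partial_n_metric_replace_replicate(2)[OF pm b, of y ys] by simp
qed simp

lemma partial_n_metric_le_if_row_close:
  assumes pm: "partial_n_metric n X P" and a: "a \<in> X"
    and ys: "length ys = n" "set ys \<subseteq> X"
    and diag: "\<bar>P (replicate n a) - r\<bar> \<le> e"
    and row: "\<And>y. y \<in> set ys \<Longrightarrow> P (replicate (n - 1) a @ [y]) \<le> r + e"
  shows "P ys \<le> r + (2 * real n + 1) * e"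
proof -
  have "(\<Sum>y\<leftarrow>ys. P (replicate (n - 1) a @ [y]) - P (replicate n a)) \<le> (\<Sum>y\<leftarrow>ys. 2 * e)"
    by (rule sum_list_mono) (use row diag in fastforce)
  then show ?thesis
    using partial_n_metric_replicate_append_le[OF pm a] ys diag
    by (fastforce simp: sum_list_triv algebra_simps)
qed

lemma partial_n_metric_ge_if_column_close:
  assumes pm: "partial_n_metric n X P" and b: "b \<in> X"
    and ys: "length ys = n" "set ys \<subseteq> X"
    and diag: "\<bar>P (replicate n b) - r\<bar> \<le> e" "\<And>y. y \<in> set ys \<Longrightarrow> \<bar>P (replicate n y) - r\<bar> \<le> e"
    and column: "\<And>y. y \<in> set ys \<Longrightarrow> P (replicate (n - 1) y @ [b]) \<le> r + e"
  shows "r - (2 * real n + 1) * e \<le> P ys"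
proof -
  have "(\<Sum>y\<leftarrow>ys. P (replicate (n - 1) y @ [b]) - P (replicate n y)) \<le> (\<Sum>y\<leftarrow>ys. 2 * e)"
    by (rule sum_list_mono) (use column diag in fastforce)
  then show ?thesis
    using partial_n_metric_replicate_append_ge[OF pm b] ys diag
    by (fastforce simp: sum_list_triv algebra_simps)
qed

lemma pnm_cauchy_imp_pairs_close:
  assumes "pnm_cauchy n P x r" "n \<ge> 1"
  shows "\<forall>\<epsilon>>0. \<exists>N. \<forall>i j. N < i \<and> N < j \<longrightarrow> \<bar>P (replicate (n - 1) (x i) @ [x j]) - r\<bar> < \<epsilon>"
proof (intro allI impI)
  fix \<epsilon> :: real assume "\<epsilon> > 0"
  obtain N where N: "\<And>is. length is = n \<Longrightarrow> \<forall>i\<in>set is. N < i \<Longrightarrow>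
      - \<epsilon> < P (map x is) - r \<and> P (map x is) - r < \<epsilon>"
    using assms(1) \<open>\<epsilon> > 0\<close> unfolding pnm_cauchy_def by blast
  have "\<bar>P (replicate (n - 1) (x i) @ [x j]) - r\<bar> < \<epsilon>" if "N < i" "N < j" for i j
    using N[of "replicate (n - 1) i @ [j]"] that assms(2) by (simp add: map_replicate abs_less_iff)
  then show "\<exists>N. \<forall>i j. N < i \<and> N < j \<longrightarrow> \<bar>P (replicate (n - 1) (x i) @ [x j]) - r\<bar> < \<epsilon>"
    by blast
qed

lemma pnm_cauchy_if_related_pairs_close:
  assumes pm: "partial_n_metric n X P" and n: "n \<ge> 1" and xX: "\<And>i. x i \<in> X"
    and refl: "\<And>i. R i i"
    and top: "\<And>S. finite S \<Longrightarrow> S \<noteq> {} \<Longrightarrow> \<exists>a\<in>S. \<forall>k\<in>S. R a k"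
    and bot: "\<And>S. finite S \<Longrightarrow> S \<noteq> {} \<Longrightarrow> \<exists>b\<in>S. \<forall>k\<in>S. R k b"
    and close: "\<forall>\<epsilon>>0. \<exists>N. \<forall>i j. N < i \<and> N < j \<and> R i j \<longrightarrow>
                  \<bar>P (replicate (n - 1) (x i) @ [x j]) - r\<bar> < \<epsilon>"
  shows "pnm_cauchy n P x r"
  unfolding pnm_cauchy_def
proof (intro allI impI)
  fix \<epsilon> :: real assume "\<epsilon> > 0"
  define e where "e = \<epsilon> / (2 * real n + 2)"
  have "e > 0" and e_small: "(2 * real n + 1) * e < \<epsilon>"
    using \<open>\<epsilon> > 0\<close> by (simp_all add: e_def field_simps)
  then obtain N where N: "\<And>i j. N < i \<Longrightarrow> N < j \<Longrightarrow> R i j \<Longrightarrow>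
      \<bar>P (replicate (n - 1) (x i) @ [x j]) - r\<bar> < e"
    using close by blast
  have pair: "P (replicate (n - 1) (x i) @ [x j]) \<le> r + e" if "N < i" "N < j" "R i j" for i j
    using N[OF that] by simp
  have diag: "\<bar>P (replicate n (x i)) - r\<bar> \<le> e" if "N < i" for i
    using N[OF that that refl] unfolding replicate_pred_snoc[OF n] by simp
  show "\<exists>N. \<forall>is. length is = n \<and> (\<forall>i\<in>set is. N < i) \<longrightarrow>
          - \<epsilon> < P (map x is) - r \<and> P (map x is) - r < \<epsilon>"
  proof (intro exI allI impI)
    fix "is" :: "nat list" assume "length is = n \<and> (\<forall>i\<in>set is. N < i)"
    then have len: "length (map x is) = n" and large: "\<And>i. i \<in> set is \<Longrightarrow> N < i"
      and ne: "set is \<noteq> {}" using n by auto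
    obtain a where a: "a \<in> set is" "\<And>k. k \<in> set is \<Longrightarrow> R a k"
      using top[OF finite_set ne] by blast
    obtain b where b: "b \<in> set is" "\<And>k. k \<in> set is \<Longrightarrow> R k b"
      using bot[OF finite_set ne] by blast
    have set_is: "set (map x is) \<subseteq> X" using xX by auto
    have "P (map x is) \<le> r + (2 * real n + 1) * e"
    proof (rule partial_n_metric_le_if_row_close[OF pm xX[of a] len set_is])
      show "\<bar>P (replicate n (x a)) - r\<bar> \<le> e" using diag large a(1) by blast
      show "P (replicate (n - 1) (x a) @ [y]) \<le> r + e" if "y \<in> set (map x is)" for y
        using that pair large a by auto
    qed
    moreover have "r - (2 * real n + 1) * e \<le> P (map x is)"
    proof (rule partial_n_metric_ge_if_column_close[OF pm xX[of b] len set_is])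
      show "\<bar>P (replicate n (x b)) - r\<bar> \<le> e" using diag large b(1) by blast
      show "\<bar>P (replicate n y) - r\<bar> \<le> e" if "y \<in> set (map x is)" for y
        using that diag large by auto
      show "P (replicate (n - 1) y @ [x b]) \<le> r + e" if "y \<in> set (map x is)" for y
        using that pair large b by auto
    qed
    ultimately show "- \<epsilon> < P (map x is) - r \<and> P (map x is) - r < \<epsilon>"
      using e_small by linarith
  qed
qed

lemma pnm_cauchy_if_close_below_diagonal:
  assumes "partial_n_metric n X P" "n \<ge> 1" "\<And>i. x i \<in> X"
    and "\<forall>\<epsilon>>0. \<exists>N. \<forall>i j. i \<ge> j \<and> j > N \<longrightarrow> \<bar>P (replicate (n - 1) (x i) @ [x j]) - r\<bar> < \<epsilon>"
  shows "pnm_cauchy n P x r"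
proof (rule pnm_cauchy_if_related_pairs_close[OF assms(1-3), where R = "\<lambda>i j. j \<le> i"])
  show "\<exists>a\<in>S. \<forall>k\<in>S. k \<le> a" if "finite S" "S \<noteq> {}" for S :: "nat set"
    using that by (meson Max_in Max_ge)
  show "\<exists>b\<in>S. \<forall>k\<in>S. b \<le> k" if "finite S" "S \<noteq> {}" for S :: "nat set"
    using that by (meson Min_in Min_le)
qed (simp, use assms(4) in blast)

lemma pnm_cauchy_if_close_above_diagonal:
  assumes "partial_n_metric n X P" "n \<ge> 1" "\<And>i. x i \<in> X"
    and "\<forall>\<epsilon>>0. \<exists>N. \<forall>i j. i \<ge> j \<and> j > N \<longrightarrow> \<bar>P (replicate (n - 1) (x j) @ [x i]) - r\<bar> < \<epsilon>"
  shows "pnm_cauchy n P x r"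
proof (rule pnm_cauchy_if_related_pairs_close[OF assms(1-3), where R = "(\<le>)"])
  show "\<exists>a\<in>S. \<forall>k\<in>S. a \<le> k" if "finite S" "S \<noteq> {}" for S :: "nat set"
    using that by (meson Min_in Min_le)
  show "\<exists>b\<in>S. \<forall>k\<in>S. k \<le> b" if "finite S" "S \<noteq> {}" for S :: "nat set"
    using that by (meson Max_in Max_ge)
qed (simp, use assms(4) in blast)

theorem theorem4p11:
  fixes n :: nat and X :: "'a set" and P :: "'a list \<Rightarrow> real"
    and x :: "nat \<Rightarrow> 'a" and r :: real
  assumes "n \<ge> 2" and "partial_n_metric n X P" and "\<And>i. x i \<in> X"
  shows "(pnm_cauchy n P x r \<longleftrightarrow>
          (\<forall>\<epsilon>>0. \<exists>N::nat. \<forall>i j. i > N \<and> j > N \<longrightarrow>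
             - \<epsilon> < P (replicate (n - 1) (x i) @ [x j]) - r \<and> P (replicate (n - 1) (x i) @ [x j]) - r < \<epsilon>)) \<and>
         (pnm_cauchy n P x r \<longleftrightarrow>
          (\<forall>\<epsilon>>0. \<exists>N::nat. \<forall>i j. i \<ge> j \<and> j > N \<longrightarrow>
             - \<epsilon> < P (replicate (n - 1) (x i) @ [x j]) - r \<and> P (replicate (n - 1) (x i) @ [x j]) - r < \<epsilon>)) \<and>
         (pnm_cauchy n P x r \<longleftrightarrow>
          (\<forall>\<epsilon>>0. \<exists>N::nat. \<forall>i j. i \<ge> j \<and> j > N \<longrightarrow>
             - \<epsilon> < P (replicate (n - 1) (x j) @ [x i]) - r \<and> P (replicate (n - 1) (x j) @ [x i]) - r < \<epsilon>))"
proof -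
  have n: "n \<ge> 1" using assms(1) by simp
  have abs_less: "(- \<epsilon> < d \<and> d < \<epsilon>) \<longleftrightarrow> \<bar>d\<bar> < \<epsilon>" for d \<epsilon> :: real
    by auto
  let ?close = "\<lambda>\<epsilon> i j. \<bar>P (replicate (n - 1) (x i) @ [x j]) - r\<bar> < \<epsilon>"
  let ?all_pairs = "\<forall>\<epsilon>>0. \<exists>N::nat. \<forall>i j. i > N \<and> j > N \<longrightarrow> ?close \<epsilon> i j"
  let ?below = "\<forall>\<epsilon>>0. \<exists>N::nat. \<forall>i j. i \<ge> j \<and> j > N \<longrightarrow> ?close \<epsilon> i j"
  let ?above = "\<forall>\<epsilon>>0. \<exists>N::nat. \<forall>i j. i \<ge> j \<and> j > N \<longrightarrow> ?close \<epsilon> j i"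
  have cauchy_all_pairs: ?all_pairs if "pnm_cauchy n P x r"
    using pnm_cauchy_imp_pairs_close[OF that n] .
  have all_pairs_below: ?below if ?all_pairs
    using that by (meson order.strict_trans2)
  have all_pairs_above: ?above if ?all_pairs
    using that by (meson order.strict_trans2)
  have below_cauchy: "pnm_cauchy n P x r" if ?below
    using pnm_cauchy_if_close_below_diagonal[OF assms(2) n assms(3) that] .
  have above_cauchy: "pnm_cauchy n P x r" if ?above
    using pnm_cauchy_if_close_above_diagonal[OF assms(2) n assms(3) that] .
  show ?thesis
    unfolding abs_less
    using cauchy_all_pairs all_pairs_below all_pairs_above below_cauchy above_cauchy by blast
qed

end
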